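(* For any $n\in\mathbb N$, $\alpha_1,\dots,\alpha_n\ge0$ and $x_1,\dots,x_n\in\mathbb R$, there exists at most one Nash equilibrium for mean-variance optimization on $[0,T]$.
   Context: Fix $T>0$, a filtered probability space carrying a standard Brownian motion $W$, constants $S_0\in\mathbb R$, $\sigma\ge0$, $\gamma\ge0$, $\lambda>0$, and a deterministic continuous $b:[0,T]\to\mathbb R$; unaffected price $S^0(t)=S_0+\sigma W(t)+\int_0^tb(s)ds$. $\mathscr X_{\det}(x,T)$ is the set of deterministic absolutely continuous, bounded functions $X$ on $[0,T]$ with $\int_0^T\dot X(t)^2dt<\infty$, $X(0)=x$, $X(T)=0$. When $n$ agents use $X_1,\dots,X_n$, the price is $S^{X_1,\dots,X_n}(t)=S^0(t)+\gamma\sum_{j=1}^n(X_j(t)-X_j(0))+\lambda\sum_{j=1}^n\dot X_j(t)$ and agent $i$'s revenues are $\mathscr R(X_i|\mathbf X_{-i})=-\int_0^T\dot X_i(t)S^{X_1,\dots,X_n}(t)dt$, $\mathbf X_{-i}=\{X_j:j\neq i\}$. A Nash equilibrium for mean-variance optimization (initial positions $x_i$, risk aversions $\alpha_i$) is a collection $X_i^*\in\mathscr X_{\det}(x_i,T)$ such that each $X_i^*$ maximizes $X\mapsto\mathbb E[\mathscr R(X|\mathbf X^*_{-i})]-\frac{\alpha_i}{2}\mathrm{var}(\mathscr R(X|\mathbf X^*_{-i}))$ over $\mathscr X_{\det}(x_i,T)$ (agent $i$ uses $X$, agents $j\neq i$ use $X_j^*$). *)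

theory Defs
  imports "HOL-Probability.Probability"
begin

definition std_brownian_motion :: "'a measure \<Rightarrow> (real \<Rightarrow> 'a \<Rightarrow> real) \<Rightarrow> bool" where
  "std_brownian_motion M W \<longleftrightarrow>
     prob_space M \<and>
     (\<forall>t\<ge>0. W t \<in> borel_measurable M) \<and>
     (\<forall>\<omega>\<in>space M. W 0 \<omega> = 0 \<and> continuous_on {0..} (\<lambda>t. W t \<omega>)) \<and>
     (\<forall>s t. 0 \<le> s \<and> s < t \<longrightarrow>
        distributed M lborel (\<lambda>\<omega>. W t \<omega> - W s \<omega>) (normal_density 0 (sqrt (t - s)))) \<and>
     (\<forall>ts :: real list. sorted_wrt (<) ts \<and> (\<forall>t\<in>set ts. 0 \<le> t) \<longrightarrow>
        prob_space.indep_vars M (\<lambda>_. borel)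
          (\<lambda>k \<omega>. W (ts ! Suc k) \<omega> - W (ts ! k) \<omega>) {..<length ts - 1})"

definition admissible :: "real \<Rightarrow> real \<Rightarrow> (real \<Rightarrow> real) \<Rightarrow> (real \<Rightarrow> real) \<Rightarrow> bool" where
  "admissible x T X v \<longleftrightarrow>
     v \<in> borel_measurable borel \<and>
     set_integrable lborel {0..T} (\<lambda>t. (v t)\<^sup>2) \<and>
     (\<forall>t\<in>{0..T}. X t = x + (\<integral>s\<in>{0..t}. v s \<partial>lborel)) \<and>
     X T = 0"

definition unaffected_price ::
  "real \<Rightarrow> real \<Rightarrow> (real \<Rightarrow> real) \<Rightarrow> (real \<Rightarrow> 'a \<Rightarrow> real) \<Rightarrow> real \<Rightarrow> 'a \<Rightarrow> real" where
  "unaffected_price S0 \<sigma> b W t \<omega> = S0 + \<sigma> * W t \<omega> + (\<integral>s\<in>{0..t}. b s \<partial>lborel)"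

definition revenue ::
  "real \<Rightarrow> real \<Rightarrow> (real \<Rightarrow> real) \<Rightarrow> (real \<Rightarrow> 'a \<Rightarrow> real) \<Rightarrow> real \<Rightarrow> real \<Rightarrow> real \<Rightarrow> nat \<Rightarrow> nat
   \<Rightarrow> (nat \<Rightarrow> real \<Rightarrow> real) \<Rightarrow> (nat \<Rightarrow> real \<Rightarrow> real) \<Rightarrow> (real \<Rightarrow> real) \<Rightarrow> (real \<Rightarrow> real) \<Rightarrow> 'a \<Rightarrow> real" where
  "revenue S0 \<sigma> b W \<gamma> lam T n i X v Y w \<omega> =
     - (\<integral>t\<in>{0..T}. w t *
          (unaffected_price S0 \<sigma> b W t \<omega>
           + \<gamma> * ((Y t - Y 0) + (\<Sum>j\<in>{..<n} - {i}. X j t - X j 0))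
           + lam * (w t + (\<Sum>j\<in>{..<n} - {i}. v j t))) \<partial>lborel)"

definition mv_objective ::
  "'a measure \<Rightarrow> real \<Rightarrow> real \<Rightarrow> (real \<Rightarrow> real) \<Rightarrow> (real \<Rightarrow> 'a \<Rightarrow> real) \<Rightarrow> real \<Rightarrow> real \<Rightarrow> real
   \<Rightarrow> nat \<Rightarrow> real \<Rightarrow> nat \<Rightarrow> (nat \<Rightarrow> real \<Rightarrow> real) \<Rightarrow> (nat \<Rightarrow> real \<Rightarrow> real)
   \<Rightarrow> (real \<Rightarrow> real) \<Rightarrow> (real \<Rightarrow> real) \<Rightarrow> real" where
  "mv_objective M S0 \<sigma> b W \<gamma> lam T n a i X v Y w =
     prob_space.expectation M (revenue S0 \<sigma> b W \<gamma> lam T n i X v Y w)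
     - a / 2 * prob_space.variance M (revenue S0 \<sigma> b W \<gamma> lam T n i X v Y w)"

definition nash_equilibrium_mv ::
  "'a measure \<Rightarrow> real \<Rightarrow> real \<Rightarrow> (real \<Rightarrow> real) \<Rightarrow> (real \<Rightarrow> 'a \<Rightarrow> real) \<Rightarrow> real \<Rightarrow> real \<Rightarrow> real
   \<Rightarrow> nat \<Rightarrow> (nat \<Rightarrow> real) \<Rightarrow> (nat \<Rightarrow> real) \<Rightarrow> (nat \<Rightarrow> real \<Rightarrow> real) \<Rightarrow> bool" where
  "nash_equilibrium_mv M S0 \<sigma> b W \<gamma> lam T n \<alpha> x X \<longleftrightarrow>
     (\<exists>v. (\<forall>i<n. admissible (x i) T (X i) (v i)) \<and>
          (\<forall>i<n. \<forall>Y w. admissible (x i) T Y w \<longrightarrow>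
              mv_objective M S0 \<sigma> b W \<gamma> lam T n (\<alpha> i) i X v Y w
              \<le> mv_objective M S0 \<sigma> b W \<gamma> lam T n (\<alpha> i) i X v (X i) (v i)))"

end

theory Submission
  imports Defs
begin

text \<open>Let \<open>X, X'\<close> be two equilibria with speeds \<open>v, v'\<close>. An agent's objective is the mean-variance
  value of the revenue earned against the unaffected price, which is concave in the agent's own speed and
  does not depend on the others, minus a deterministic quadratic impact cost. Let agent \<open>i\<close> move a
  quarter of the way from \<open>X i\<close> towards \<open>X' i\<close> in the equilibrium \<open>X\<close>, and vice versa in \<open>X'\<close>.
  Optimality of both equilibria and concavity show that the total change of impact cost is nonpositive,
  which reads \<open>\<integral> d\<^sub>i (\<gamma> (D\<^sub>i/8 + D/4) + \<lambda> (d\<^sub>i/8 + d/4)) \<le> 0\<close> for \<open>d\<^sub>i = v i - v' i\<close>, its primitive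
  \<open>D\<^sub>i = X i - X' i\<close> and the aggregates \<open>d, D\<close>. Summing over the agents and using
  \<open>\<integral>\<^sub>0\<^sup>T f F = (\<integral>\<^sub>0\<^sup>T f)\<^sup>2/2 \<ge> 0\<close> for \<open>F t = \<integral>\<^sub>0\<^sup>t f\<close> leaves \<open>\<lambda>/8 \<Sum>\<^sub>i \<integral> d\<^sub>i\<^sup>2 \<le> 0\<close>,
  hence \<open>X = X'\<close>.\<close>

section \<open>Integrals against a primitive\<close>

lemma integrable_product_lborel:
  fixes g :: "real \<Rightarrow> real"
  assumes g: "integrable lborel g"
  shows "integrable (lborel \<Otimes>\<^sub>M lborel) (\<lambda>(s, t). g s * g t)"
proof (rule integrableI_bounded)
  have [measurable]: "g \<in> borel_measurable lborel" using g by auto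
  show "(\<lambda>(s, t). g s * g t) \<in> borel_measurable (lborel \<Otimes>\<^sub>M lborel)" by measurable
  have "(\<integral>\<^sup>+x. ennreal (norm ((\<lambda>(s, t). g s * g t) x)) \<partial>(lborel \<Otimes>\<^sub>M lborel))
      = (\<integral>\<^sup>+s. \<integral>\<^sup>+t. ennreal (norm (g s)) * ennreal (norm (g t)) \<partial>lborel \<partial>lborel)"
    by (subst lborel.nn_integral_fst[symmetric]) (auto simp: abs_mult ennreal_mult)
  also have "\<dots> = (\<integral>\<^sup>+t. ennreal (norm (g t)) \<partial>lborel) * (\<integral>\<^sup>+t. ennreal (norm (g t)) \<partial>lborel)"
    by (simp add: nn_integral_cmult nn_integral_multc)
  also have "\<dots> < \<infinity>"
    using g by (simp add: integrable_iff_bounded ennreal_mult_less_top)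
  finally show "(\<integral>\<^sup>+x. ennreal (norm ((\<lambda>(s, t). g s * g t) x)) \<partial>(lborel \<Otimes>\<^sub>M lborel)) < \<infinity>" .
qed

lemma borel_measurable_integral_atMost:
  fixes g :: "real \<Rightarrow> real"
  assumes [measurable]: "g \<in> borel_measurable lborel"
  shows "(\<lambda>t. \<integral>s. g s * indicator {..t} s \<partial>lborel) \<in> borel_measurable lborel"
proof -
  have "(\<lambda>(t, s). g s * (if s \<le> t then 1 else 0)) \<in> borel_measurable (lborel \<Otimes>\<^sub>M lborel)"
    by measurable
  then have "(\<lambda>t. \<integral>s. g s * (if s \<le> t then 1 else 0) \<partial>lborel) \<in> borel_measurable lborel"
    by (rule lborel.borel_measurable_lebesgue_integral)
  then show ?thesis by (simp add: indicator_def of_bool_def)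
qed

lemma integrable_mult_integral_atMost:
  fixes g :: "real \<Rightarrow> real"
  assumes g: "integrable lborel g"
  shows "integrable lborel (\<lambda>t. g t * (\<integral>s. g s * indicator {..t} s \<partial>lborel))"
proof (rule Bochner_Integration.integrable_bound)
  have [measurable]: "g \<in> borel_measurable lborel" using g by auto
  show "integrable lborel (\<lambda>t. norm (g t) * (\<integral>s. norm (g s) \<partial>lborel))"
    using g by auto
  show "(\<lambda>t. g t * (\<integral>s. g s * indicator {..t} s \<partial>lborel)) \<in> borel_measurable lborel"
    using borel_measurable_integral_atMost by measurable
  have "norm (\<integral>s. g s * indicator {..t} s \<partial>lborel) \<le> (\<integral>s. norm (g s) \<partial>lborel)" for t
  proof -
    have "integrable lborel (\<lambda>s. g s * indicator {..t} s)"
      using integrable_mult_indicator[of "{..t}" lborel g] g by (simp add: mult.commute)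
    then have "(\<integral>s. norm (g s * indicator {..t} s) \<partial>lborel) \<le> (\<integral>s. norm (g s) \<partial>lborel)"
      using g by (intro integral_mono) (auto simp: indicator_def)
    then show ?thesis by (rule order.trans[OF integral_norm_bound])
  qed
  then show "AE t in lborel. norm (g t * (\<integral>s. g s * indicator {..t} s \<partial>lborel))
      \<le> norm (norm (g t) * (\<integral>s. norm (g s) \<partial>lborel))"
    by (auto simp: abs_mult intro!: mult_left_mono)
qed

text \<open>Integrating \<open>g s * g t\<close> over the half-plane \<open>s \<le> t\<close> in both orders gives
  \<open>\<integral> g G = (\<integral> g)\<^sup>2 - \<integral> g G\<close> for the primitive \<open>G\<close>, the diagonal being a null set.\<close>

lemma integral_mult_integral_atMost:
  fixes g :: "real \<Rightarrow> real"
  assumes g: "integrable lborel g"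
  shows "2 * (\<integral>t. g t * (\<integral>s. g s * indicator {..t} s \<partial>lborel) \<partial>lborel) = (\<integral>t. g t \<partial>lborel)\<^sup>2"
proof -
  have [measurable]: "g \<in> borel_measurable lborel" using g by auto
  define G where "G t = (\<integral>s. g s * indicator {..t} s \<partial>lborel)" for t
  define H where "H s t = (if s \<le> t then g s * g t else 0)" for s t :: real
  have H: "integrable (lborel \<Otimes>\<^sub>M lborel) (\<lambda>(s, t). H s t)"
    using g by (intro Bochner_Integration.integrable_bound[OF integrable_product_lborel[OF g]])
      (auto simp: H_def)
  have inner_fst: "(\<integral>s. H s t \<partial>lborel) = g t * G t" for t
    unfolding H_def G_def
    by (subst integral_mult_right_zero[symmetric], rule Bochner_Integration.integral_cong)
       (auto simp: indicator_def)
  have inner_snd: "(\<integral>t. H s t \<partial>lborel) = g s * ((\<integral>t. g t \<partial>lborel) - G s)" for s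
  proof -
    have "(\<integral>t. H s t \<partial>lborel) = (\<integral>t. g s * (g t - g t * indicator {..<s} t) \<partial>lborel)"
      unfolding H_def by (rule Bochner_Integration.integral_cong) (auto simp: indicator_def)
    also have "\<dots> = g s * ((\<integral>t. g t \<partial>lborel) - (\<integral>t. g t * indicator {..<s} t \<partial>lborel))"
      using g integrable_mult_indicator[of "{..<s}" lborel g] by (simp add: mult.commute)
    also have "(\<integral>t. g t * indicator {..<s} t \<partial>lborel) = G s"
      unfolding G_def
      by (rule integral_cong_AE)
         (auto intro!: eventually_mono[OF AE_lborel_singleton[of s]] simp: indicator_def)
    finally show ?thesis .
  qed
  have "(\<integral>t. g t * G t \<partial>lborel) = (\<integral>s. g s * ((\<integral>t. g t \<partial>lborel) - G s) \<partial>lborel)"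
    using lborel_pair.Fubini_integral[OF H] by (simp add: inner_fst inner_snd)
  also have "\<dots> = (\<integral>s. g s \<partial>lborel) * (\<integral>t. g t \<partial>lborel) - (\<integral>s. g s * G s \<partial>lborel)"
    using g integrable_mult_integral_atMost[OF g] by (simp add: right_diff_distrib G_def)
  finally show ?thesis unfolding G_def by (simp add: power2_eq_square)
qed

lemma set_integral_mult_indefinite_nonneg:
  fixes f F :: "real \<Rightarrow> real"
  assumes f: "set_integrable lborel {0..T} f"
    and F: "\<And>t. t \<in> {0..T} \<Longrightarrow> F t = (LINT s:{0..t}|lborel. f s)"
  shows "0 \<le> (LINT t:{0..T}|lborel. f t * F t)"
proof -
  define g where "g t = indicator {0..T} t * f t" for t
  have g: "integrable lborel g" using f unfolding g_def[abs_def] set_integrable_def by simp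
  have pointwise: "g t * (\<integral>s. g s * indicator {..t} s \<partial>lborel) = indicator {0..T} t *\<^sub>R (f t * F t)" for t
  proof (cases "t \<in> {0..T}")
    case True
    then have "(\<integral>s. g s * indicator {..t} s \<partial>lborel) = F t"
      unfolding F[OF True] set_lebesgue_integral_def g_def
      by (intro Bochner_Integration.integral_cong) (auto simp: indicator_def)
    then show ?thesis using True by (simp add: g_def)
  qed (simp add: g_def)
  have "(LINT t:{0..T}|lborel. f t * F t) = (\<integral>t. g t * (\<integral>s. g s * indicator {..t} s \<partial>lborel) \<partial>lborel)"
    unfolding set_lebesgue_integral_def pointwise ..
  also have "\<dots> = (\<integral>t. g t \<partial>lborel)\<^sup>2 / 2"
    using integral_mult_integral_atMost[OF g] by linarith
  finally have "(LINT t:{0..T}|lborel. f t * F t) = (\<integral>t. g t \<partial>lborel)\<^sup>2 / 2" .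
  then show ?thesis using zero_le_power2[of "\<integral>t. g t \<partial>lborel"] by linarith
qed

section \<open>Square-integrable functions on an interval\<close>

definition square_integrable_on :: "real \<Rightarrow> (real \<Rightarrow> real) \<Rightarrow> bool" where
  "square_integrable_on T f \<longleftrightarrow> f \<in> borel_measurable borel \<and> set_integrable lborel {0..T} (\<lambda>t. (f t)\<^sup>2)"

lemma set_integrable_of_square_bound:
  fixes f g :: "real \<Rightarrow> real"
  assumes "square_integrable_on T f" "square_integrable_on T g"
    and h: "h \<in> borel_measurable borel" and bound: "\<And>t. \<bar>h t\<bar> \<le> c * ((f t)\<^sup>2 + (g t)\<^sup>2)"
  shows "set_integrable lborel {0..T} h"
proof (rule set_integrable_bound)
  show "set_integrable lborel {0..T} (\<lambda>t. c * ((f t)\<^sup>2 + (g t)\<^sup>2))"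
    using assms(1,2) by (auto simp: square_integrable_on_def)
  show "set_borel_measurable lborel {0..T} h"
    using h by (simp add: set_borel_measurable_def)
  have "0 \<le> c * ((f t)\<^sup>2 + (g t)\<^sup>2)" for t
    using abs_ge_zero bound order.trans by blast
  then show "AE t in lborel. t \<in> {0..T} \<longrightarrow> norm (h t) \<le> norm (c * ((f t)\<^sup>2 + (g t)\<^sup>2))"
    using bound by auto
qed

lemma set_integrable_mult_square_integrable_on:
  assumes f: "square_integrable_on T f" and g: "square_integrable_on T g"
  shows "set_integrable lborel {0..T} (\<lambda>t. f t * g t)"
proof (rule set_integrable_of_square_bound[OF f g, where c = 1])
  show "(\<lambda>t. f t * g t) \<in> borel_measurable borel"
    using f g by (auto simp: square_integrable_on_def)
  have AM_GM: "2 * \<bar>f t * g t\<bar> \<le> (f t)\<^sup>2 + (g t)\<^sup>2" for t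
    using sum_squares_bound[of "\<bar>f t\<bar>" "\<bar>g t\<bar>"] by (simp add: abs_mult)
  show "\<bar>f t * g t\<bar> \<le> 1 * ((f t)\<^sup>2 + (g t)\<^sup>2)" for t
    using AM_GM[of t] by (smt (verit) abs_ge_zero)
qed

lemma square_integrable_on_imp_set_integrable:
  assumes f: "square_integrable_on T f"
  shows "set_integrable lborel {0..T} f"
proof -
  have "square_integrable_on T (\<lambda>t. 1)"
    using borel_integrable_atLeastAtMost'[OF continuous_on_const[of _ 1]]
    by (simp add: square_integrable_on_def)
  then show ?thesis using set_integrable_mult_square_integrable_on[OF f, of "\<lambda>t. 1"] by simp
qed

lemma square_integrable_on_lincomb:
  assumes f: "square_integrable_on T f" and g: "square_integrable_on T g"
  shows "square_integrable_on T (\<lambda>t. a * f t + c * g t)"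
proof -
  have [measurable]: "f \<in> borel_measurable borel" "g \<in> borel_measurable borel"
    using f g by (auto simp: square_integrable_on_def)
  have "set_integrable lborel {0..T} (\<lambda>t. (a * f t + c * g t)\<^sup>2)"
  proof (rule set_integrable_of_square_bound[OF f g, where c = "2 * (a\<^sup>2 + c\<^sup>2)"])
    show "(\<lambda>t. (a * f t + c * g t)\<^sup>2) \<in> borel_measurable borel" by measurable
    have "(a * f t + c * g t)\<^sup>2 \<le> 2 * (a\<^sup>2 + c\<^sup>2) * ((f t)\<^sup>2 + (g t)\<^sup>2)" for t
    proof -
      have "2 * (a\<^sup>2 + c\<^sup>2) * ((f t)\<^sup>2 + (g t)\<^sup>2) - (a * f t + c * g t)\<^sup>2
          = (a * f t - c * g t)\<^sup>2 + 2 * (a * g t)\<^sup>2 + 2 * (c * f t)\<^sup>2"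
        by (simp add: power2_eq_square algebra_simps)
      moreover have "0 \<le> (a * f t - c * g t)\<^sup>2 + 2 * (a * g t)\<^sup>2 + 2 * (c * f t)\<^sup>2" by simp
      ultimately show ?thesis by linarith
    qed
    then show "\<bar>(a * f t + c * g t)\<^sup>2\<bar> \<le> 2 * (a\<^sup>2 + c\<^sup>2) * ((f t)\<^sup>2 + (g t)\<^sup>2)" for t
      by simp
  qed
  then show ?thesis by (simp add: square_integrable_on_def)
qed

lemma square_integrable_on_sum:
  assumes "finite A" "\<And>j. j \<in> A \<Longrightarrow> square_integrable_on T (f j)"
  shows "square_integrable_on T (\<lambda>t. \<Sum>j\<in>A. f j t)"
  using assms
proof (induction A rule: finite_induct)
  case empty
  then show ?case by (simp add: square_integrable_on_def set_integrable_def)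
next
  case (insert j A)
  then have "square_integrable_on T (\<lambda>t. 1 * f j t + 1 * (\<Sum>j\<in>A. f j t))"
    by (intro square_integrable_on_lincomb) auto
  then show ?case using insert by simp
qed

lemma nn_integral_square_indicator_finite:
  assumes "square_integrable_on T w"
  shows "(\<integral>\<^sup>+t. ennreal ((indicator {0..T} t * w t)\<^sup>2) \<partial>lborel) < \<infinity>"
proof -
  have "integrable lborel (\<lambda>t. indicator {0..T} t *\<^sub>R (w t)\<^sup>2)"
    using assms by (simp add: square_integrable_on_def set_integrable_def)
  moreover have "(\<lambda>t. ennreal ((indicator {0..T} t * w t)\<^sup>2))
      = (\<lambda>t. ennreal (norm (indicator {0..T} t *\<^sub>R (w t)\<^sup>2)))"
    by (auto simp: indicator_def)
  ultimately show ?thesis by (simp add: integrable_iff_bounded)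
qed

lemma set_integrable_mult_continuous_on:
  fixes f h :: "real \<Rightarrow> real"
  assumes f: "set_integrable lborel {0..T} f" and h: "continuous_on {0..T} h"
  shows "set_integrable lborel {0..T} (\<lambda>t. f t * h t)"
proof -
  obtain B where "B \<ge> 0" and B: "\<And>t. t \<in> {0..T} \<Longrightarrow> norm (h t) \<le> B"
    using continuous_on_compact_bound[OF compact_Icc h] by blast
  have [measurable]: "(\<lambda>t. indicator {0..T} t *\<^sub>R h t) \<in> borel_measurable borel"
    by (rule borel_measurable_continuous_on_indicator[OF _ h]) simp
  have [measurable]: "(\<lambda>t. indicator {0..T} t *\<^sub>R f t) \<in> borel_measurable borel"
    using f by (auto simp: set_integrable_def)
  show ?thesis
  proof (rule set_integrable_bound)
    show "set_integrable lborel {0..T} (\<lambda>t. B * f t)" using f by simp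
    have "(\<lambda>t. (indicator {0..T} t *\<^sub>R f t) * (indicator {0..T} t *\<^sub>R h t)) \<in> borel_measurable borel"
      by measurable
    moreover have "(\<lambda>t. (indicator {0..T} t *\<^sub>R f t) * (indicator {0..T} t *\<^sub>R h t))
        = (\<lambda>t. indicator {0..T} t *\<^sub>R (f t * h t))"
      by (auto simp: indicator_def)
    ultimately show "set_borel_measurable lborel {0..T} (\<lambda>t. f t * h t)"
      unfolding set_borel_measurable_def by simp
    show "AE t in lborel. t \<in> {0..T} \<longrightarrow> norm (f t * h t) \<le> norm (B * f t)"
      using B \<open>B \<ge> 0\<close> by (intro AE_I2) (auto simp: abs_mult mult.commute[of B] intro!: mult_left_mono)
  qed
qed

lemma square_integrable_on_mult_continuous_on:
  assumes "square_integrable_on T f" "continuous_on {0..T} h"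
  shows "set_integrable lborel {0..T} (\<lambda>t. f t * h t)"
  using assms set_integrable_mult_continuous_on square_integrable_on_imp_set_integrable by blast

lemma continuous_on_indefinite_set_integral:
  fixes f :: "real \<Rightarrow> real"
  assumes f: "set_integrable lborel {0..T} f"
  shows "continuous_on {0..T} (\<lambda>t. LINT s:{0..t}|lborel. f s)"
proof -
  have "continuous_on {0..T} (\<lambda>t. integral {0..t} f)"
    using set_borel_integral_eq_integral(1)[OF f] by (rule indefinite_integral_continuous_1)
  then show ?thesis
    by (rule continuous_on_eq)
      (use set_borel_integral_eq_integral(2)[OF set_integrable_subset[OF f]] in auto)
qed

lemma set_integral_sum:
  fixes f :: "'i \<Rightarrow> 'a \<Rightarrow> real"
  assumes "\<And>j. j \<in> J \<Longrightarrow> set_integrable M A (f j)"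
  shows "(LINT t:A|M. (\<Sum>j\<in>J. f j t)) = (\<Sum>j\<in>J. LINT t:A|M. f j t)"
  using assms unfolding set_lebesgue_integral_def set_integrable_def scaleR_sum_right
  by (intro Bochner_Integration.integral_sum) auto

lemma indefinite_set_integral_sum:
  fixes f :: "'i \<Rightarrow> real \<Rightarrow> real"
  assumes "\<And>j. j \<in> J \<Longrightarrow> set_integrable lborel {0..T} (f j)" and "t \<in> {0..T}"
  shows "(\<Sum>j\<in>J. LINT s:{0..t}|lborel. f j s) = (LINT s:{0..t}|lborel. (\<Sum>j\<in>J. f j s))"
proof -
  have "set_integrable lborel {0..t} (f j)" if "j \<in> J" for j
    using set_integrable_subset[OF assms(1)[OF that], of "{0..t}"] assms(2) by auto
  then show ?thesis by (simp add: set_integral_sum)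
qed

lemma indefinite_integral_eq_0_of_square_integral_eq_0:
  assumes f: "square_integrable_on T f" and z: "(LINT t:{0..T}|lborel. (f t)\<^sup>2) = 0"
    and t: "t \<in> {0..T}"
  shows "(LINT s:{0..t}|lborel. f s) = 0"
proof -
  have "AE s in lborel. indicator {0..T} s *\<^sub>R (f s)\<^sup>2 = 0"
    using f z integral_nonneg_eq_0_iff_AE[of lborel "\<lambda>s. indicator {0..T} s *\<^sub>R (f s)\<^sup>2"]
    by (auto simp: square_integrable_on_def set_integrable_def set_lebesgue_integral_def)
  then have "AE s in lborel. indicator {0..t} s *\<^sub>R f s = 0"
    by eventually_elim (use t in \<open>auto simp: indicator_def split: if_splits\<close>)
  then show ?thesis
    unfolding set_lebesgue_integral_def by (rule integral_eq_zero_AE)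
qed

section \<open>The mean-variance functional\<close>

definition mean_variance :: "'a measure \<Rightarrow> real \<Rightarrow> ('a \<Rightarrow> real) \<Rightarrow> real" where
  "mean_variance M a R = prob_space.expectation M R - a / 2 * prob_space.variance M R"

context prob_space
begin

lemma mean_variance_cong:
  assumes "\<And>\<omega>. \<omega> \<in> space M \<Longrightarrow> R \<omega> = N \<omega>"
  shows "mean_variance M a R = mean_variance M a N"
proof -
  have "expectation R = expectation N"
    using assms by (intro Bochner_Integration.integral_cong) auto
  moreover have "variance R = variance N"
    unfolding \<open>expectation R = expectation N\<close> using assms
    by (intro Bochner_Integration.integral_cong) auto
  ultimately show ?thesis by (simp add: mean_variance_def)
qed

lemma mean_variance_add_const:
  assumes "integrable M N"
  shows "mean_variance M a (\<lambda>\<omega>. N \<omega> + c) = mean_variance M a N + c"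
  using assms by (simp add: mean_variance_def prob_space)

lemma integrable_square_affine:
  fixes X Y :: "'a \<Rightarrow> real"
  assumes [measurable]: "X \<in> borel_measurable M" "Y \<in> borel_measurable M"
    and "integrable M (\<lambda>\<omega>. (X \<omega>)\<^sup>2)" "integrable M (\<lambda>\<omega>. (Y \<omega>)\<^sup>2)"
  shows "integrable M (\<lambda>\<omega>. (c1 * X \<omega> + c2 * Y \<omega> + c3)\<^sup>2)"
proof (rule Bochner_Integration.integrable_bound)
  show "integrable M (\<lambda>\<omega>. 3 * c1\<^sup>2 * (X \<omega>)\<^sup>2 + 3 * c2\<^sup>2 * (Y \<omega>)\<^sup>2 + 3 * c3\<^sup>2)"
    using assms(3,4) by auto
  show "(\<lambda>\<omega>. (c1 * X \<omega> + c2 * Y \<omega> + c3)\<^sup>2) \<in> borel_measurable M" by measurable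
  have "(c1 * X \<omega> + c2 * Y \<omega> + c3)\<^sup>2 \<le> 3 * c1\<^sup>2 * (X \<omega>)\<^sup>2 + 3 * c2\<^sup>2 * (Y \<omega>)\<^sup>2 + 3 * c3\<^sup>2" for \<omega>
  proof -
    have "0 \<le> (c1 * X \<omega> - c2 * Y \<omega>)\<^sup>2 + (c1 * X \<omega> - c3)\<^sup>2 + (c2 * Y \<omega> - c3)\<^sup>2" by simp
    then show ?thesis by (simp add: power2_eq_square algebra_simps)
  qed
  then show "AE \<omega> in M. norm ((c1 * X \<omega> + c2 * Y \<omega> + c3)\<^sup>2)
      \<le> norm (3 * c1\<^sup>2 * (X \<omega>)\<^sup>2 + 3 * c2\<^sup>2 * (Y \<omega>)\<^sup>2 + 3 * c3\<^sup>2)"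
    by (intro AE_I2) simp
qed

text \<open>\<open>(p x + q y)\<^sup>2 + (q x + p y)\<^sup>2 = x\<^sup>2 + y\<^sup>2 - 2 p q (x - y)\<^sup>2\<close> for \<open>p + q = 1\<close>, applied to the
  centred variables.\<close>

lemma variance_exchange_le:
  fixes X Y :: "'a \<Rightarrow> real"
  assumes [measurable]: "X \<in> borel_measurable M" "Y \<in> borel_measurable M"
    and X2: "integrable M (\<lambda>\<omega>. (X \<omega>)\<^sup>2)" and Y2: "integrable M (\<lambda>\<omega>. (Y \<omega>)\<^sup>2)"
    and p: "0 \<le> p" "p \<le> 1"
  shows "variance (\<lambda>\<omega>. p * X \<omega> + (1 - p) * Y \<omega>) + variance (\<lambda>\<omega>. (1 - p) * X \<omega> + p * Y \<omega>)
    \<le> variance X + variance Y"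
proof -
  define q where "q = 1 - p"
  define ex ey where "ex = expectation X" and "ey = expectation Y"
  have X1: "integrable M X" and Y1: "integrable M Y"
    using X2 Y2 by (auto intro: square_integrable_imp_integrable)
  have I: "integrable M (\<lambda>\<omega>. (c1 * X \<omega> + c2 * Y \<omega> + c3)\<^sup>2)" for c1 c2 c3
    using X2 Y2 by (rule integrable_square_affine[rotated 2]) measurable
  have E1: "expectation (\<lambda>\<omega>. p * X \<omega> + q * Y \<omega>) = p * ex + q * ey"
    and E2: "expectation (\<lambda>\<omega>. q * X \<omega> + p * Y \<omega>) = q * ex + p * ey"
    using X1 Y1 by (simp_all add: ex_def ey_def)
  have pointwise: "(p * X \<omega> + q * Y \<omega> + (- p * ex - q * ey))\<^sup>2 + (q * X \<omega> + p * Y \<omega> + (- q * ex - p * ey))\<^sup>2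
      \<le> (1 * X \<omega> + 0 * Y \<omega> + (- ex))\<^sup>2 + (0 * X \<omega> + 1 * Y \<omega> + (- ey))\<^sup>2" for \<omega>
  proof -
    have "(X \<omega> - ex)\<^sup>2 + (Y \<omega> - ey)\<^sup>2
        - ((p * X \<omega> + q * Y \<omega> + (- p * ex - q * ey))\<^sup>2 + (q * X \<omega> + p * Y \<omega> + (- q * ex - p * ey))\<^sup>2)
        = 2 * (p * q) * (X \<omega> - ex - (Y \<omega> - ey))\<^sup>2"
      unfolding q_def power2_eq_square by algebra
    moreover have "0 \<le> 2 * (p * q) * (X \<omega> - ex - (Y \<omega> - ey))\<^sup>2"
      using p by (simp add: q_def)
    ultimately show ?thesis by simp
  qed
  have "variance (\<lambda>\<omega>. p * X \<omega> + q * Y \<omega>) + variance (\<lambda>\<omega>. q * X \<omega> + p * Y \<omega>)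
      = expectation (\<lambda>\<omega>. (p * X \<omega> + q * Y \<omega> + (- p * ex - q * ey))\<^sup>2
          + (q * X \<omega> + p * Y \<omega> + (- q * ex - p * ey))\<^sup>2)"
    unfolding E1 E2 Bochner_Integration.integral_add[OF I I] by (simp add: algebra_simps)
  also have "\<dots> \<le> expectation (\<lambda>\<omega>. (1 * X \<omega> + 0 * Y \<omega> + (- ex))\<^sup>2 + (0 * X \<omega> + 1 * Y \<omega> + (- ey))\<^sup>2)"
    by (intro integral_mono pointwise Bochner_Integration.integrable_add I)
  also have "\<dots> = variance X + variance Y"
    unfolding Bochner_Integration.integral_add[OF I I] by (simp add: ex_def ey_def)
  finally show ?thesis unfolding q_def .
qed

lemma mean_variance_exchange_concave:
  fixes X Y :: "'a \<Rightarrow> real"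
  assumes "X \<in> borel_measurable M" "Y \<in> borel_measurable M"
    and X2: "integrable M (\<lambda>\<omega>. (X \<omega>)\<^sup>2)" and Y2: "integrable M (\<lambda>\<omega>. (Y \<omega>)\<^sup>2)"
    and p: "0 \<le> p" "p \<le> 1" and a: "0 \<le> a"
  shows "mean_variance M a X + mean_variance M a Y
    \<le> mean_variance M a (\<lambda>\<omega>. p * X \<omega> + (1 - p) * Y \<omega>) + mean_variance M a (\<lambda>\<omega>. (1 - p) * X \<omega> + p * Y \<omega>)"
proof -
  have "integrable M X" "integrable M Y"
    using assms by (auto intro: square_integrable_imp_integrable)
  then have "expectation (\<lambda>\<omega>. p * X \<omega> + (1 - p) * Y \<omega>) + expectation (\<lambda>\<omega>. (1 - p) * X \<omega> + p * Y \<omega>)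
      = expectation X + expectation Y"
    by (simp add: algebra_simps)
  moreover have "a / 2 * (variance (\<lambda>\<omega>. p * X \<omega> + (1 - p) * Y \<omega>) + variance (\<lambda>\<omega>. (1 - p) * X \<omega> + p * Y \<omega>))
      \<le> a / 2 * (variance X + variance Y)"
    using variance_exchange_le[OF assms(1-6)] a by (intro mult_left_mono) auto
  ultimately show ?thesis by (simp add: mean_variance_def algebra_simps)
qed

end

section \<open>Unaffected price and revenue\<close>

lemma std_brownian_motionD:
  assumes "std_brownian_motion M W"
  shows "prob_space M" and "\<And>t. t \<ge> 0 \<Longrightarrow> W t \<in> borel_measurable M"
    and "\<And>\<omega>. \<omega> \<in> space M \<Longrightarrow> W 0 \<omega> = 0"
    and "\<And>\<omega>. \<omega> \<in> space M \<Longrightarrow> continuous_on {0..} (\<lambda>t. W t \<omega>)"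
    and "\<And>t. t > 0 \<Longrightarrow> distributed M lborel (\<lambda>\<omega>. W t \<omega> - W 0 \<omega>) (normal_density 0 (sqrt t))"
proof -
  show "prob_space M" "\<And>t. t \<ge> 0 \<Longrightarrow> W t \<in> borel_measurable M"
    "\<And>\<omega>. \<omega> \<in> space M \<Longrightarrow> W 0 \<omega> = 0"
    "\<And>\<omega>. \<omega> \<in> space M \<Longrightarrow> continuous_on {0..} (\<lambda>t. W t \<omega>)"
    using assms unfolding std_brownian_motion_def by auto
  show "distributed M lborel (\<lambda>\<omega>. W t \<omega> - W 0 \<omega>) (normal_density 0 (sqrt t))" if "t > 0" for t
  proof -
    have "\<forall>s t. 0 \<le> s \<and> s < t \<longrightarrow>
        distributed M lborel (\<lambda>\<omega>. W t \<omega> - W s \<omega>) (normal_density 0 (sqrt (t - s)))"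
      using assms unfolding std_brownian_motion_def by blast
    then show ?thesis using that by (metis diff_zero order_refl)
  qed
qed

lemma nn_integral_std_brownian_motion_square:
  assumes bm: "std_brownian_motion M W" and t: "t \<ge> 0"
  shows "(\<integral>\<^sup>+\<omega>. ennreal ((W t \<omega>)\<^sup>2) \<partial>M) = ennreal t"
proof (cases "t = 0")
  case True
  then show ?thesis
    using std_brownian_motionD(3)[OF bm] by (simp add: nn_integral_cong[of M _ "\<lambda>_. 0"])
next
  case False
  with t have t: "0 < t" by simp
  have "(\<integral>\<^sup>+\<omega>. ennreal ((W t \<omega>)\<^sup>2) \<partial>M) = (\<integral>\<^sup>+\<omega>. ennreal ((W t \<omega> - W 0 \<omega>)\<^sup>2) \<partial>M)"
    using std_brownian_motionD(3)[OF bm] by (intro nn_integral_cong) simp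
  also have "\<dots> = (\<integral>\<^sup>+x. ennreal (normal_density 0 (sqrt t) x) * ennreal (x\<^sup>2) \<partial>lborel)"
    by (rule distributed_nn_integral[symmetric, OF std_brownian_motionD(5)[OF bm t]]) simp
  also have "\<dots> = (\<integral>\<^sup>+x. ennreal (normal_density 0 (sqrt t) x * x\<^sup>2) \<partial>lborel)"
    by (simp add: ennreal_mult'')
  also have "\<dots> = ennreal t"
  proof -
    have "has_bochner_integral lborel (\<lambda>x. normal_density 0 (sqrt t) x * (x - 0) ^ (2 * 1))
        (fact (2 * 1) / ((2 / (sqrt t)\<^sup>2) ^ 1 * fact 1))"
      by (rule normal_moment_even) (use t in simp)
    then have "has_bochner_integral lborel (\<lambda>x. normal_density 0 (sqrt t) x * x\<^sup>2) t"
      using t by simp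
    then show ?thesis
      by (subst nn_integral_eq_integral) (auto simp: has_bochner_integral_iff)
  qed
  finally show ?thesis .
qed

lemma LIMSEQ_floor_grid:
  fixes t :: real
  assumes "t \<ge> 0"
  shows "(\<lambda>n. max 0 (real_of_int \<lfloor>real (Suc n) * t\<rfloor> / real (Suc n))) \<longlonglongrightarrow> t"
proof -
  define c where "c n = real (Suc n)" for n
  have c: "c n > 0" for n by (simp add: c_def)
  have floor: "real_of_int \<lfloor>c n * t\<rfloor> \<le> c n * t" "c n * t < real_of_int \<lfloor>c n * t\<rfloor> + 1" for n
    by linarith+
  have lower: "t - 1 / c n \<le> real_of_int \<lfloor>c n * t\<rfloor> / c n" for n
  proof -
    have "t - 1 / c n = (c n * t - 1) / c n" using c[of n] by (simp add: field_simps)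
    also have "\<dots> \<le> real_of_int \<lfloor>c n * t\<rfloor> / c n"
      using c[of n] floor(2)[of n] by (intro divide_right_mono) auto
    finally show ?thesis .
  qed
  have upper: "real_of_int \<lfloor>c n * t\<rfloor> / c n \<le> t" for n
    using floor(1)[of n] c[of n] by (simp add: pos_divide_le_eq mult.commute)
  have "(\<lambda>n. t - 1 / c n) \<longlonglongrightarrow> t - 0"
    unfolding c_def using tendsto_diff[OF tendsto_const LIMSEQ_inverse_real_of_nat, of t]
    by (simp add: inverse_eq_divide)
  then have lim: "(\<lambda>n. t - 1 / c n) \<longlonglongrightarrow> t" by simp
  have "(\<lambda>n. real_of_int \<lfloor>c n * t\<rfloor> / c n) \<longlonglongrightarrow> t"
    by (rule real_tendsto_sandwich[OF always_eventually always_eventually lim tendsto_const])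
       (use lower upper in auto)
  then have "(\<lambda>n. max 0 (real_of_int \<lfloor>c n * t\<rfloor> / c n)) \<longlonglongrightarrow> max 0 t"
    by (intro tendsto_max tendsto_const)
  then show ?thesis using assms by (simp add: c_def)
qed

text \<open>A process with continuous paths is jointly measurable: it is the pointwise limit of its
  samples on the grids \<open>\<int>/(n+1)\<close>, which are countably-valued in time.\<close>

lemma borel_measurable_pair_of_continuous_paths:
  fixes F :: "real \<Rightarrow> 'a \<Rightarrow> real"
  assumes meas: "\<And>s. s \<ge> 0 \<Longrightarrow> F s \<in> borel_measurable M"
    and cont: "\<And>\<omega>. \<omega> \<in> space M \<Longrightarrow> continuous_on {0..T} (\<lambda>t. F t \<omega>)"
  shows "(\<lambda>(\<omega>, t). indicator {0..T} t * F t \<omega>) \<in> borel_measurable (M \<Otimes>\<^sub>M lborel)"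
proof -
  define s where "s n t = max 0 (real_of_int \<lfloor>real (Suc n) * t\<rfloor> / real (Suc n))" for n t
  define u where "u n x = indicator {0..T} (snd x) * F (s n (snd x)) (fst x)" for n x
  show ?thesis
  proof (rule borel_measurable_LIMSEQ_real[where u = u])
    show "(\<lambda>n. u n x) \<longlonglongrightarrow> (case x of (\<omega>, t) \<Rightarrow> indicator {0..T} t * F t \<omega>)"
      if x: "x \<in> space (M \<Otimes>\<^sub>M lborel)" for x
    proof (cases x)
      case (Pair \<omega> t)
      show ?thesis
      proof (cases "t \<in> {0..T}")
        case True
        have "s n t \<in> {0..T}" for n
        proof -
          have "real_of_int \<lfloor>real (Suc n) * t\<rfloor> / real (Suc n) \<le> t"
            by (simp add: field_simps del: of_nat_Suc)
          then show ?thesis using True by (auto simp: s_def)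
        qed
        then have "(\<lambda>n. F (s n t) \<omega>) \<longlonglongrightarrow> F t \<omega>"
          using continuous_on_tendsto_compose[OF cont LIMSEQ_floor_grid[of t]] True x Pair
          by (auto simp: s_def space_pair_measure)
        then show ?thesis using True Pair by (simp add: u_def)
      qed (simp add: Pair u_def)
    qed
    show "u n \<in> borel_measurable (M \<Otimes>\<^sub>M lborel)" for n
    proof -
      have grid: "(\<lambda>x. indicator {0..T} (snd x) * F (max 0 (real_of_int k / real (Suc n))) (fst x))
          \<in> borel_measurable (M \<Otimes>\<^sub>M lborel)" for k :: int
      proof -
        have [measurable]: "F (max 0 (real_of_int k / real (Suc n))) \<in> borel_measurable M"
          by (rule meas) simp
        show ?thesis by measurable
      qed
      have "(\<lambda>x. \<lfloor>real (Suc n) * snd x\<rfloor>) \<in> measurable (M \<Otimes>\<^sub>M lborel) (count_space UNIV)"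
        by (rule measurable_compose[OF _ measurable_real_floor]) measurable
      then show ?thesis
        unfolding u_def s_def by (rule measurable_compose_countable'[OF grid]) simp
    qed
  qed
qed

lemma integral_mult_square_le_nn_integral:
  fixes f g :: "'a \<Rightarrow> real"
  assumes [measurable]: "f \<in> borel_measurable M" "g \<in> borel_measurable M"
  shows "ennreal ((\<integral>x. f x * g x \<partial>M)\<^sup>2)
    \<le> (\<integral>\<^sup>+x. ennreal ((f x)\<^sup>2) \<partial>M) * (\<integral>\<^sup>+x. ennreal ((g x)\<^sup>2) \<partial>M)"
proof -
  have "ennreal \<bar>\<integral>x. f x * g x \<partial>M\<bar> \<le> (\<integral>\<^sup>+x. ennreal \<bar>f x\<bar> * ennreal \<bar>g x\<bar> \<partial>M)"
  proof (cases "integrable M (\<lambda>x. f x * g x)")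
    case True
    then show ?thesis
      using integral_norm_bound_ennreal[OF True] by (simp add: abs_mult ennreal_mult)
  qed (simp add: not_integrable_integral_eq)
  then have "(ennreal \<bar>\<integral>x. f x * g x \<partial>M\<bar>)\<^sup>2 \<le> (\<integral>\<^sup>+x. ennreal \<bar>f x\<bar> * ennreal \<bar>g x\<bar> \<partial>M)\<^sup>2"
    by (rule power_mono) simp
  then have "ennreal ((\<integral>x. f x * g x \<partial>M)\<^sup>2) \<le> (\<integral>\<^sup>+x. ennreal \<bar>f x\<bar> * ennreal \<bar>g x\<bar> \<partial>M)\<^sup>2"
    by (simp add: ennreal_power)
  also have "\<dots> \<le> (\<integral>\<^sup>+x. ennreal \<bar>f x\<bar> ^ 2 \<partial>M) * (\<integral>\<^sup>+x. ennreal \<bar>g x\<bar> ^ 2 \<partial>M)"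
    by (rule Cauchy_Schwarz_nn_integral) measurable
  finally show ?thesis by (simp add: ennreal_power)
qed

lemma continuous_on_unaffected_price:
  assumes bm: "std_brownian_motion M W" and b: "continuous_on {0..T} b" and \<omega>: "\<omega> \<in> space M"
  shows "continuous_on {0..T} (\<lambda>t. unaffected_price S0 \<sigma> b W t \<omega>)"
proof -
  have "continuous_on {0..T} (\<lambda>t. LINT s:{0..t}|lborel. b s)"
    by (rule continuous_on_indefinite_set_integral[OF borel_integrable_atLeastAtMost'[OF b]])
  moreover have "continuous_on {0..T} (\<lambda>t. W t \<omega>)"
    by (rule continuous_on_subset[OF std_brownian_motionD(4)[OF bm \<omega>]]) auto
  ultimately show ?thesis unfolding unaffected_price_def by (intro continuous_intros)
qed

lemma borel_measurable_unaffected_price: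
  assumes bm: "std_brownian_motion M W" and t: "t \<ge> 0"
  shows "unaffected_price S0 \<sigma> b W t \<in> borel_measurable M"
proof -
  have [measurable]: "W t \<in> borel_measurable M" by (rule std_brownian_motionD(2)[OF bm t])
  show ?thesis unfolding unaffected_price_def[abs_def] by measurable
qed

lemma borel_measurable_pair_unaffected_price:
  assumes bm: "std_brownian_motion M W" and b: "continuous_on {0..T} b"
  shows "(\<lambda>(\<omega>, t). indicator {0..T} t * unaffected_price S0 \<sigma> b W t \<omega>) \<in> borel_measurable (M \<Otimes>\<^sub>M lborel)"
  by (rule borel_measurable_pair_of_continuous_paths[OF
        borel_measurable_unaffected_price[OF bm] continuous_on_unaffected_price[OF bm b]])

lemma nn_integral_unaffected_price_square_bounded:
  assumes bm: "std_brownian_motion M W" and b: "continuous_on {0..T} b"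
  obtains K where "\<And>t. t \<in> {0..T} \<Longrightarrow> (\<integral>\<^sup>+\<omega>. ennreal ((unaffected_price S0 \<sigma> b W t \<omega>)\<^sup>2) \<partial>M) \<le> ennreal K"
proof -
  interpret prob_space M by (rule std_brownian_motionD(1)[OF bm])
  obtain B where B: "\<And>t. t \<in> {0..T} \<Longrightarrow> norm (LINT s:{0..t}|lborel. b s) \<le> B"
    using continuous_on_compact_bound[OF compact_Icc
        continuous_on_indefinite_set_integral[OF borel_integrable_atLeastAtMost'[OF b]]] by blast
  have "(\<integral>\<^sup>+\<omega>. ennreal ((unaffected_price S0 \<sigma> b W t \<omega>)\<^sup>2) \<partial>M)
      \<le> ennreal (3 * S0\<^sup>2 + 3 * B\<^sup>2 + 3 * \<sigma>\<^sup>2 * T)" if t: "t \<in> {0..T}" for t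
  proof -
    have [measurable]: "W t \<in> borel_measurable M" using t by (intro std_brownian_motionD(2)[OF bm]) auto
    have pointwise: "(unaffected_price S0 \<sigma> b W t \<omega>)\<^sup>2 \<le> (3 * S0\<^sup>2 + 3 * B\<^sup>2) + 3 * \<sigma>\<^sup>2 * (W t \<omega>)\<^sup>2" for \<omega>
    proof -
      define I where "I = (LINT s:{0..t}|lborel. b s)"
      have "I\<^sup>2 \<le> B\<^sup>2" using B[OF t] unfolding I_def by (simp add: abs_le_square_iff[symmetric])
      moreover have "0 \<le> (S0 - \<sigma> * W t \<omega>)\<^sup>2 + (S0 - I)\<^sup>2 + (\<sigma> * W t \<omega> - I)\<^sup>2" by simp
      ultimately show ?thesis unfolding unaffected_price_def I_def[symmetric]
        by (simp add: power2_eq_square algebra_simps)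
    qed
    have "(\<integral>\<^sup>+\<omega>. ennreal ((unaffected_price S0 \<sigma> b W t \<omega>)\<^sup>2) \<partial>M)
        \<le> (\<integral>\<^sup>+\<omega>. ennreal (3 * S0\<^sup>2 + 3 * B\<^sup>2) + ennreal (3 * \<sigma>\<^sup>2) * ennreal ((W t \<omega>)\<^sup>2) \<partial>M)"
      using pointwise
      by (intro nn_integral_mono)
         (auto simp: ennreal_plus[symmetric] ennreal_mult[symmetric] simp del: ennreal_plus)
    also have "\<dots> = ennreal (3 * S0\<^sup>2 + 3 * B\<^sup>2) + ennreal (3 * \<sigma>\<^sup>2) * ennreal t"
      using t by (subst nn_integral_add)
        (auto simp: nn_integral_cmult nn_integral_std_brownian_motion_square[OF bm] emeasure_space_1)
    also have "\<dots> = ennreal (3 * S0\<^sup>2 + 3 * B\<^sup>2 + 3 * \<sigma>\<^sup>2 * t)"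
      using t by (simp add: ennreal_mult[symmetric] ennreal_plus[symmetric] del: ennreal_plus)
    also have "\<dots> \<le> ennreal (3 * S0\<^sup>2 + 3 * B\<^sup>2 + 3 * \<sigma>\<^sup>2 * T)"
      using t by (intro ennreal_leI) (simp add: mult_left_mono)
    finally show ?thesis .
  qed
  then show ?thesis using that by blast
qed

lemma nn_integral_pair_unaffected_price_square_finite:
  assumes bm: "std_brownian_motion M W" and b: "continuous_on {0..T} b" and T: "T \<ge> 0"
  shows "(\<integral>\<^sup>+\<omega>. \<integral>\<^sup>+t. ennreal ((indicator {0..T} t * unaffected_price S0 \<sigma> b W t \<omega>)\<^sup>2) \<partial>lborel \<partial>M) < \<infinity>"
proof -
  interpret prob_space M by (rule std_brownian_motionD(1)[OF bm])
  interpret pair_sigma_finite M lborel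
    by (intro pair_sigma_finite.intro sigma_finite_lborel) unfold_locales
  obtain K where K: "\<And>t. t \<in> {0..T} \<Longrightarrow> (\<integral>\<^sup>+\<omega>. ennreal ((unaffected_price S0 \<sigma> b W t \<omega>)\<^sup>2) \<partial>M) \<le> ennreal K"
    using nn_integral_unaffected_price_square_bounded[OF bm b] by blast
  have "(\<lambda>(\<omega>, t). ennreal ((indicator {0..T} t * unaffected_price S0 \<sigma> b W t \<omega>)\<^sup>2))
      \<in> borel_measurable (M \<Otimes>\<^sub>M lborel)"
    using borel_measurable_pair_unaffected_price[OF bm b] by measurable
  then have "(\<integral>\<^sup>+\<omega>. \<integral>\<^sup>+t. ennreal ((indicator {0..T} t * unaffected_price S0 \<sigma> b W t \<omega>)\<^sup>2) \<partial>lborel \<partial>M)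
      = (\<integral>\<^sup>+t. \<integral>\<^sup>+\<omega>. ennreal ((indicator {0..T} t * unaffected_price S0 \<sigma> b W t \<omega>)\<^sup>2) \<partial>M \<partial>lborel)"
    by (rule Fubini'[symmetric])
  also have "\<dots> \<le> (\<integral>\<^sup>+t. ennreal K * indicator {0..T} t \<partial>lborel)"
    using K by (intro nn_integral_mono) (auto simp: indicator_def)
  also have "\<dots> = ennreal K * ennreal T" using T by (simp add: nn_integral_cmult_indicator)
  also have "\<dots> < \<infinity>" by (simp add: ennreal_mult_less_top)
  finally show ?thesis .
qed

definition unaffected_revenue ::
  "real \<Rightarrow> real \<Rightarrow> (real \<Rightarrow> real) \<Rightarrow> (real \<Rightarrow> 'a \<Rightarrow> real) \<Rightarrow> real \<Rightarrow> (real \<Rightarrow> real) \<Rightarrow> 'a \<Rightarrow> real" where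
  "unaffected_revenue S0 \<sigma> b W T w \<omega> = - (LINT t:{0..T}|lborel. w t * unaffected_price S0 \<sigma> b W t \<omega>)"

lemma unaffected_revenue_eq_integral:
  "unaffected_revenue S0 \<sigma> b W T w \<omega>
    = - (\<integral>t. (indicator {0..T} t * w t) * (indicator {0..T} t * unaffected_price S0 \<sigma> b W t \<omega>) \<partial>lborel)"
  unfolding unaffected_revenue_def set_lebesgue_integral_def
  by (intro arg_cong[where f = uminus] Bochner_Integration.integral_cong) (auto simp: indicator_def)

lemma borel_measurable_unaffected_revenue:
  assumes bm: "std_brownian_motion M W" and b: "continuous_on {0..T} b"
    and [measurable]: "w \<in> borel_measurable borel"
  shows "unaffected_revenue S0 \<sigma> b W T w \<in> borel_measurable M"
proof -
  have [measurable]: "(\<lambda>(\<omega>, t). indicator {0..T} t * unaffected_price S0 \<sigma> b W t \<omega>) \<in> borel_measurable (M \<Otimes>\<^sub>M lborel)"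
    by (rule borel_measurable_pair_unaffected_price[OF bm b])
  have "(\<lambda>(\<omega>, t). (indicator {0..T} t * w t) * (indicator {0..T} t * unaffected_price S0 \<sigma> b W t \<omega>))
      \<in> borel_measurable (M \<Otimes>\<^sub>M lborel)"
    by measurable
  then have "(\<lambda>\<omega>. \<integral>t. (indicator {0..T} t * w t) * (indicator {0..T} t * unaffected_price S0 \<sigma> b W t \<omega>) \<partial>lborel)
      \<in> borel_measurable M"
    by (rule lborel.borel_measurable_lebesgue_integral)
  then show ?thesis
    unfolding unaffected_revenue_eq_integral[abs_def] by measurable
qed

lemma integrable_unaffected_revenue_square:
  assumes bm: "std_brownian_motion M W" and b: "continuous_on {0..T} b" and T: "T \<ge> 0"
    and w: "square_integrable_on T w"
  shows "integrable M (\<lambda>\<omega>. (unaffected_revenue S0 \<sigma> b W T w \<omega>)\<^sup>2)"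
proof -
  define P where "P \<omega> t = indicator {0..T} t * unaffected_price S0 \<sigma> b W t \<omega>" for \<omega> t
  define C where "C = (\<integral>\<^sup>+t. ennreal ((indicator {0..T} t * w t)\<^sup>2) \<partial>lborel)"
  define G where "G \<omega> = (\<integral>\<^sup>+t. ennreal ((P \<omega> t)\<^sup>2) \<partial>lborel)" for \<omega>
  have [measurable]: "w \<in> borel_measurable borel" using w by (simp add: square_integrable_on_def)
  have P[measurable]: "(\<lambda>(\<omega>, t). P \<omega> t) \<in> borel_measurable (M \<Otimes>\<^sub>M lborel)"
    unfolding P_def by (rule borel_measurable_pair_unaffected_price[OF bm b])
  have R[measurable]: "unaffected_revenue S0 \<sigma> b W T w \<in> borel_measurable M"
    by (rule borel_measurable_unaffected_revenue[OF bm b]) measurable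
  have C: "C < \<infinity>"
    unfolding C_def by (rule nn_integral_square_indicator_finite[OF w])
  have G: "(\<integral>\<^sup>+\<omega>. G \<omega> \<partial>M) < \<infinity>"
    unfolding G_def P_def by (rule nn_integral_pair_unaffected_price_square_finite[OF bm b T])
  have [measurable]: "G \<in> borel_measurable M"
  proof -
    have "(\<lambda>(\<omega>, t). ennreal ((P \<omega> t)\<^sup>2)) \<in> borel_measurable (M \<Otimes>\<^sub>M lborel)" by measurable
    then have "(\<lambda>\<omega>. \<integral>\<^sup>+t. (\<lambda>(\<omega>, t). ennreal ((P \<omega> t)\<^sup>2)) (\<omega>, t) \<partial>lborel) \<in> borel_measurable M"
      by (rule lborel.borel_measurable_nn_integral_fst)
    then show ?thesis unfolding G_def by simp
  qed
  have Cauchy_Schwarz: "ennreal ((unaffected_revenue S0 \<sigma> b W T w \<omega>)\<^sup>2) \<le> C * G \<omega>"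
    if "\<omega> \<in> space M" for \<omega>
  proof -
    have [measurable]: "P \<omega> \<in> borel_measurable lborel"
      using measurable_Pair2[OF P that] by simp
    have "ennreal ((\<integral>t. (indicator {0..T} t * w t) * P \<omega> t \<partial>lborel)\<^sup>2) \<le> C * G \<omega>"
      unfolding C_def G_def by (rule integral_mult_square_le_nn_integral) measurable
    then show ?thesis
      unfolding unaffected_revenue_eq_integral P_def by simp
  qed
  have "(\<integral>\<^sup>+\<omega>. ennreal (norm ((unaffected_revenue S0 \<sigma> b W T w \<omega>)\<^sup>2)) \<partial>M) \<le> (\<integral>\<^sup>+\<omega>. C * G \<omega> \<partial>M)"
    using Cauchy_Schwarz by (intro nn_integral_mono) simp
  also have "\<dots> = C * (\<integral>\<^sup>+\<omega>. G \<omega> \<partial>M)"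
    by (rule nn_integral_cmult) measurable
  also have "\<dots> < \<infinity>" using C G by (simp add: ennreal_mult_less_top)
  finally show ?thesis by (intro integrableI_bounded) measurable
qed

lemma unaffected_revenue_lincomb:
  assumes bm: "std_brownian_motion M W" and b: "continuous_on {0..T} b" and \<omega>: "\<omega> \<in> space M"
    and v1: "square_integrable_on T v1" and v2: "square_integrable_on T v2"
  shows "unaffected_revenue S0 \<sigma> b W T (\<lambda>t. p * v1 t + q * v2 t) \<omega>
    = p * unaffected_revenue S0 \<sigma> b W T v1 \<omega> + q * unaffected_revenue S0 \<sigma> b W T v2 \<omega>"
proof -
  have "set_integrable lborel {0..T} (\<lambda>t. v t * unaffected_price S0 \<sigma> b W t \<omega>)"
    if "square_integrable_on T v" for v
    by (rule square_integrable_on_mult_continuous_on[OF that continuous_on_unaffected_price[OF bm b \<omega>]])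
  then show ?thesis
    using v1 v2 unfolding unaffected_revenue_def
    by (simp add: distrib_right mult.assoc set_integral_add(2))
qed

section \<open>Admissible strategies and impact cost\<close>

lemma admissible_square_integrable: "admissible x T X v \<Longrightarrow> square_integrable_on T v"
  by (simp add: admissible_def square_integrable_on_def)

lemma admissible_start:
  assumes "admissible x T X v" "T \<ge> 0"
  shows "X 0 = x"
proof -
  have "AE s in lborel. indicator {0..0} s *\<^sub>R v s = 0"
    by (rule eventually_mono[OF AE_lborel_singleton[of 0]]) (auto simp: indicator_def)
  then have "(LINT s:{0..0}|lborel. v s) = 0"
    unfolding set_lebesgue_integral_def by (rule integral_eq_zero_AE)
  then show ?thesis using assms by (auto simp: admissible_def)
qed

lemma admissible_diff:
  assumes X: "admissible x T X v" and X': "admissible x T X' v'" and t: "t \<in> {0..T}"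
  shows "X t - X' t = (LINT s:{0..t}|lborel. v s - v' s)"
proof -
  have "set_integrable lborel {0..t} v" "set_integrable lborel {0..t} v'"
    using X X' t by (auto intro!: set_integrable_subset[OF square_integrable_on_imp_set_integrable]
        admissible_square_integrable)
  then show ?thesis using X X' t by (simp add: admissible_def)
qed

lemma continuous_on_admissible:
  assumes "admissible x T X v"
  shows "continuous_on {0..T} X"
proof -
  have "continuous_on {0..T} (\<lambda>t. x + (LINT s:{0..t}|lborel. v s))"
    using continuous_on_indefinite_set_integral[OF square_integrable_on_imp_set_integrable[OF
          admissible_square_integrable[OF assms]]]
    by (intro continuous_intros)
  then show ?thesis
    by (rule continuous_on_eq) (use assms in \<open>simp add: admissible_def\<close>)
qed

lemma admissible_convex_comb:
  assumes X1: "admissible x T X1 v1" and X2: "admissible x T X2 v2"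
  shows "admissible x T (\<lambda>t. p * X1 t + (1 - p) * X2 t) (\<lambda>t. p * v1 t + (1 - p) * v2 t)"
proof -
  have v: "set_integrable lborel {0..t} v1" "set_integrable lborel {0..t} v2" if "t \<in> {0..T}" for t
    using X1 X2 that by (auto intro!: set_integrable_subset[OF square_integrable_on_imp_set_integrable]
        admissible_square_integrable)
  have "square_integrable_on T (\<lambda>t. p * v1 t + (1 - p) * v2 t)"
    using X1 X2 by (intro square_integrable_on_lincomb admissible_square_integrable)
  moreover have "p * X1 t + (1 - p) * X2 t = x + (LINT s:{0..t}|lborel. p * v1 s + (1 - p) * v2 s)"
    if "t \<in> {0..T}" for t
    using X1 X2 that v[OF that] by (simp add: admissible_def algebra_simps)
  ultimately show ?thesis
    using X1 X2 by (simp add: admissible_def square_integrable_on_def)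
qed

definition impact_cost_rate ::
  "real \<Rightarrow> real \<Rightarrow> nat \<Rightarrow> nat \<Rightarrow> (nat \<Rightarrow> real \<Rightarrow> real) \<Rightarrow> (nat \<Rightarrow> real \<Rightarrow> real)
    \<Rightarrow> (real \<Rightarrow> real) \<Rightarrow> (real \<Rightarrow> real) \<Rightarrow> real \<Rightarrow> real" where
  "impact_cost_rate \<gamma> lam n i X v Y w t =
     w t * (\<gamma> * ((Y t - Y 0) + (\<Sum>j\<in>{..<n} - {i}. X j t - X j 0)) + lam * (w t + (\<Sum>j\<in>{..<n} - {i}. v j t)))"

definition impact_cost ::
  "real \<Rightarrow> real \<Rightarrow> real \<Rightarrow> nat \<Rightarrow> nat \<Rightarrow> (nat \<Rightarrow> real \<Rightarrow> real) \<Rightarrow> (nat \<Rightarrow> real \<Rightarrow> real)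
    \<Rightarrow> (real \<Rightarrow> real) \<Rightarrow> (real \<Rightarrow> real) \<Rightarrow> real" where
  "impact_cost \<gamma> lam T n i X v Y w = (LINT t:{0..T}|lborel. impact_cost_rate \<gamma> lam n i X v Y w t)"

lemma set_integrable_impact_cost_rate:
  assumes Y: "admissible (x i) T Y w" and X: "\<forall>j<n. admissible (x j) T (X j) (v j)"
  shows "set_integrable lborel {0..T} (impact_cost_rate \<gamma> lam n i X v Y w)"
proof -
  have w: "square_integrable_on T w" by (rule admissible_square_integrable[OF Y])
  have "continuous_on {0..T} (\<lambda>t. (Y t - Y 0) + (\<Sum>j\<in>{..<n} - {i}. X j t - X j 0))"
    using X continuous_on_admissible[OF Y] by (intro continuous_intros) (auto intro: continuous_on_admissible)
  then have position: "set_integrable lborel {0..T}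
      (\<lambda>t. w t * ((Y t - Y 0) + (\<Sum>j\<in>{..<n} - {i}. X j t - X j 0)))"
    by (rule square_integrable_on_mult_continuous_on[OF w])
  have "square_integrable_on T (\<lambda>t. 1 * w t + 1 * (\<Sum>j\<in>{..<n} - {i}. v j t))"
    using X by (intro square_integrable_on_lincomb square_integrable_on_sum w)
      (auto intro: admissible_square_integrable)
  then have "set_integrable lborel {0..T} (\<lambda>t. w t * (w t + (\<Sum>j\<in>{..<n} - {i}. v j t)))"
    using set_integrable_mult_square_integrable_on[OF w] by simp
  with position have "set_integrable lborel {0..T}
      (\<lambda>t. \<gamma> * (w t * ((Y t - Y 0) + (\<Sum>j\<in>{..<n} - {i}. X j t - X j 0)))
        + lam * (w t * (w t + (\<Sum>j\<in>{..<n} - {i}. v j t))))"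
    by (intro set_integral_add(1) set_integrable_mult_right)
  then show ?thesis unfolding impact_cost_rate_def[abs_def] by (simp add: algebra_simps)
qed

lemma mv_objective_eq_unaffected_minus_impact:
  assumes bm: "std_brownian_motion M W" and b: "continuous_on {0..T} b" and T: "T \<ge> 0"
    and Y: "admissible (x i) T Y w" and X: "\<forall>j<n. admissible (x j) T (X j) (v j)"
  shows "mv_objective M S0 \<sigma> b W \<gamma> lam T n a i X v Y w
    = mean_variance M a (unaffected_revenue S0 \<sigma> b W T w) - impact_cost \<gamma> lam T n i X v Y w"
proof -
  interpret prob_space M by (rule std_brownian_motionD(1)[OF bm])
  have w: "square_integrable_on T w" by (rule admissible_square_integrable[OF Y])
  have "revenue S0 \<sigma> b W \<gamma> lam T n i X v Y w \<omega>
      = unaffected_revenue S0 \<sigma> b W T w \<omega> + - impact_cost \<gamma> lam T n i X v Y w"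
    if "\<omega> \<in> space M" for \<omega>
    using set_integral_add(2)[OF square_integrable_on_mult_continuous_on[OF w
          continuous_on_unaffected_price[OF bm b that]] set_integrable_impact_cost_rate[OF Y X]]
    unfolding revenue_def unaffected_revenue_def impact_cost_def impact_cost_rate_def
    by (simp add: distrib_left add.assoc)
  then have "mv_objective M S0 \<sigma> b W \<gamma> lam T n a i X v Y w
      = mean_variance M a (\<lambda>\<omega>. unaffected_revenue S0 \<sigma> b W T w \<omega> + - impact_cost \<gamma> lam T n i X v Y w)"
    unfolding mv_objective_def mean_variance_def[symmetric] by (rule mean_variance_cong)
  also have "\<dots> = mean_variance M a (unaffected_revenue S0 \<sigma> b W T w) - impact_cost \<gamma> lam T n i X v Y w"
    using borel_measurable_unaffected_revenue[OF bm b] integrable_unaffected_revenue_square[OF bm b T w] w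
    by (subst mean_variance_add_const) (auto intro: square_integrable_imp_integrable simp: square_integrable_on_def)
  finally show ?thesis .
qed

lemma set_integral_square_nonneg: "0 \<le> (LINT t:A|M. (f t :: real)\<^sup>2)"
  unfolding set_lebesgue_integral_def by (intro integral_nonneg_AE) (auto simp: indicator_def)

lemma set_integral_interaction_split:
  assumes f: "square_integrable_on T f" and g: "square_integrable_on T g"
    and F: "continuous_on {0..T} F" and G: "continuous_on {0..T} G"
  shows "(LINT t:{0..T}|lborel. f t * (\<gamma> * (1/8 * F t + 1/4 * G t) + lam * (1/8 * f t + 1/4 * g t)))
    = \<gamma> / 8 * (LINT t:{0..T}|lborel. f t * F t) + lam / 8 * (LINT t:{0..T}|lborel. (f t)\<^sup>2)
      + (\<gamma> / 4 * (LINT t:{0..T}|lborel. f t * G t) + lam / 4 * (LINT t:{0..T}|lborel. f t * g t))"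
proof -
  have "set_integrable lborel {0..T} (\<lambda>t. f t * F t)" "set_integrable lborel {0..T} (\<lambda>t. (f t)\<^sup>2)"
    "set_integrable lborel {0..T} (\<lambda>t. f t * G t)" "set_integrable lborel {0..T} (\<lambda>t. f t * g t)"
    using f g F G by (auto simp: square_integrable_on_def intro: square_integrable_on_mult_continuous_on
        set_integrable_mult_square_integrable_on)
  moreover have "(LINT t:{0..T}|lborel. f t * (\<gamma> * (1/8 * F t + 1/4 * G t) + lam * (1/8 * f t + 1/4 * g t)))
    = (LINT t:{0..T}|lborel. \<gamma> / 8 * (f t * F t) + lam / 8 * (f t)\<^sup>2
        + (\<gamma> / 4 * (f t * G t) + lam / 4 * (f t * g t)))"
    by (intro set_lebesgue_integral_cong) (auto simp: power2_eq_square algebra_simps)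
  ultimately show ?thesis by simp
qed

lemma sum_interaction_integrals:
  fixes d D :: "nat \<Rightarrow> real \<Rightarrow> real" and n :: nat
  assumes d: "\<And>j. j < n \<Longrightarrow> square_integrable_on T (d j)"
    and D: "\<And>j. j < n \<Longrightarrow> continuous_on {0..T} (D j)"
  shows "(\<Sum>i<n. LINT t:{0..T}|lborel. d i t *
      (\<gamma> * (1/8 * D i t + 1/4 * (\<Sum>j<n. D j t)) + lam * (1/8 * d i t + 1/4 * (\<Sum>j<n. d j t))))
    = \<gamma> / 8 * (\<Sum>i<n. LINT t:{0..T}|lborel. d i t * D i t) + lam / 8 * (\<Sum>i<n. LINT t:{0..T}|lborel. (d i t)\<^sup>2)
      + (\<gamma> / 4 * (LINT t:{0..T}|lborel. (\<Sum>j<n. d j t) * (\<Sum>j<n. D j t))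
         + lam / 4 * (LINT t:{0..T}|lborel. (\<Sum>j<n. d j t)\<^sup>2))"
proof -
  define ds Ds where "ds t = (\<Sum>j<n. d j t)" and "Ds t = (\<Sum>j<n. D j t)" for t
  have ds: "square_integrable_on T ds"
    unfolding ds_def using d by (intro square_integrable_on_sum) auto
  have Ds: "continuous_on {0..T} Ds"
    unfolding Ds_def using D by (intro continuous_intros) auto
  have "(\<Sum>i<n. LINT t:{0..T}|lborel. d i t *
      (\<gamma> * (1/8 * D i t + 1/4 * Ds t) + lam * (1/8 * d i t + 1/4 * ds t)))
    = (\<Sum>i<n. \<gamma> / 8 * (LINT t:{0..T}|lborel. d i t * D i t) + lam / 8 * (LINT t:{0..T}|lborel. (d i t)\<^sup>2)
        + (\<gamma> / 4 * (LINT t:{0..T}|lborel. d i t * Ds t) + lam / 4 * (LINT t:{0..T}|lborel. d i t * ds t)))"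
    using d D ds Ds by (intro sum.cong refl set_integral_interaction_split) auto
  also have "\<dots> = \<gamma> / 8 * (\<Sum>i<n. LINT t:{0..T}|lborel. d i t * D i t)
      + lam / 8 * (\<Sum>i<n. LINT t:{0..T}|lborel. (d i t)\<^sup>2)
      + (\<gamma> / 4 * (\<Sum>i<n. LINT t:{0..T}|lborel. d i t * Ds t)
         + lam / 4 * (\<Sum>i<n. LINT t:{0..T}|lborel. d i t * ds t))"
    by (simp only: sum.distrib sum_distrib_left)
  also have "(\<Sum>i<n. LINT t:{0..T}|lborel. d i t * Ds t) = (LINT t:{0..T}|lborel. ds t * Ds t)"
    unfolding ds_def using d Ds
    by (subst set_integral_sum[symmetric]) (auto simp: sum_distrib_right intro: square_integrable_on_mult_continuous_on)
  also have "(\<Sum>i<n. LINT t:{0..T}|lborel. d i t * ds t) = (LINT t:{0..T}|lborel. (\<Sum>i<n. d i t * ds t))"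
    using d ds by (intro set_integral_sum[symmetric] set_integrable_mult_square_integrable_on) auto
  also have "\<dots> = (LINT t:{0..T}|lborel. (ds t)\<^sup>2)"
    by (simp add: ds_def sum_distrib_right power2_eq_square)
  finally show ?thesis unfolding ds_def Ds_def .
qed

lemma indefinite_integrals_vanish:
  fixes d D :: "nat \<Rightarrow> real \<Rightarrow> real" and n :: nat
  assumes d: "\<And>j. j < n \<Longrightarrow> square_integrable_on T (d j)"
    and D: "\<And>j t. j < n \<Longrightarrow> t \<in> {0..T} \<Longrightarrow> D j t = (LINT s:{0..t}|lborel. d j s)"
    and \<gamma>: "\<gamma> \<ge> 0" and lam: "lam > 0"
    and ineq: "\<And>i. i < n \<Longrightarrow> (LINT t:{0..T}|lborel. d i t *
      (\<gamma> * (1/8 * D i t + 1/4 * (\<Sum>j<n. D j t)) + lam * (1/8 * d i t + 1/4 * (\<Sum>j<n. d j t)))) \<le> 0"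
    and i: "i < n" and t: "t \<in> {0..T}"
  shows "D i t = 0"
proof -
  define b where "b j = (LINT t:{0..T}|lborel. (d j t)\<^sup>2)" for j
  have d1: "set_integrable lborel {0..T} (d j)" if "j < n" for j
    using d[OF that] by (rule square_integrable_on_imp_set_integrable)
  have "continuous_on {0..T} (D j)" if "j < n" for j
    using continuous_on_indefinite_set_integral[OF d1[OF that]]
    by (rule continuous_on_eq) (simp add: D[OF that])
  moreover have "(\<Sum>i<n. LINT t:{0..T}|lborel. d i t *
      (\<gamma> * (1/8 * D i t + 1/4 * (\<Sum>j<n. D j t)) + lam * (1/8 * d i t + 1/4 * (\<Sum>j<n. d j t)))) \<le> 0"
    using ineq by (intro sum_nonpos) auto
  ultimately have interaction: "\<gamma> / 8 * (\<Sum>j<n. LINT t:{0..T}|lborel. d j t * D j t) + lam / 8 * (\<Sum>j<n. b j)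
      + (\<gamma> / 4 * (LINT t:{0..T}|lborel. (\<Sum>j<n. d j t) * (\<Sum>j<n. D j t))
         + lam / 4 * (LINT t:{0..T}|lborel. (\<Sum>j<n. d j t)\<^sup>2)) \<le> 0"
    unfolding b_def using sum_interaction_integrals[OF d] by simp
  have "0 \<le> (\<Sum>j<n. LINT t:{0..T}|lborel. d j t * D j t)"
    using d1 D by (intro sum_nonneg set_integral_mult_indefinite_nonneg) auto
  moreover have "0 \<le> (LINT t:{0..T}|lborel. (\<Sum>j<n. d j t) * (\<Sum>j<n. D j t))"
  proof (rule set_integral_mult_indefinite_nonneg)
    show "set_integrable lborel {0..T} (\<lambda>t. \<Sum>j<n. d j t)"
      using d by (intro square_integrable_on_imp_set_integrable square_integrable_on_sum) auto
    show "(\<Sum>j<n. D j t) = (LINT s:{0..t}|lborel. (\<Sum>j<n. d j s))" if "t \<in> {0..T}" for t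
      using D that indefinite_set_integral_sum[of "{..<n}" T d t] d1 that by simp
  qed
  ultimately have "0 \<le> \<gamma> / 8 * (\<Sum>j<n. LINT t:{0..T}|lborel. d j t * D j t)
      + (\<gamma> / 4 * (LINT t:{0..T}|lborel. (\<Sum>j<n. d j t) * (\<Sum>j<n. D j t))
         + lam / 4 * (LINT t:{0..T}|lborel. (\<Sum>j<n. d j t)\<^sup>2))"
    using \<gamma> lam set_integral_square_nonneg by (intro add_nonneg_nonneg mult_nonneg_nonneg) simp_all
  with interaction have "lam / 8 * (\<Sum>j<n. b j) \<le> 0" by linarith
  with lam have "(\<Sum>j<n. b j) \<le> 0" by (simp add: mult_le_0_iff)
  moreover have b: "0 \<le> b j" for j unfolding b_def by (rule set_integral_square_nonneg)
  ultimately have "(\<Sum>j<n. b j) = 0" by (meson antisym sum_nonneg)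
  then have "b i = 0" using sum_nonneg_eq_0_iff[of "{..<n}" b] b i by simp
  then show ?thesis
    using D[OF i t] indefinite_integral_eq_0_of_square_integral_eq_0[OF d[OF i] _ t] by (simp add: b_def)
qed

lemma mean_variance_unaffected_revenue_exchange:
  assumes bm: "std_brownian_motion M W" and b: "continuous_on {0..T} b" and T: "T \<ge> 0"
    and v1: "square_integrable_on T v1" and v2: "square_integrable_on T v2"
    and p: "0 \<le> p" "p \<le> 1" and a: "0 \<le> a"
  shows "mean_variance M a (unaffected_revenue S0 \<sigma> b W T v1) + mean_variance M a (unaffected_revenue S0 \<sigma> b W T v2)
    \<le> mean_variance M a (unaffected_revenue S0 \<sigma> b W T (\<lambda>t. p * v1 t + (1 - p) * v2 t))
      + mean_variance M a (unaffected_revenue S0 \<sigma> b W T (\<lambda>t. p * v2 t + (1 - p) * v1 t))"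
proof -
  interpret prob_space M by (rule std_brownian_motionD(1)[OF bm])
  let ?R = "unaffected_revenue S0 \<sigma> b W T"
  have "mean_variance M a (?R v1) + mean_variance M a (?R v2)
      \<le> mean_variance M a (\<lambda>\<omega>. p * ?R v1 \<omega> + (1 - p) * ?R v2 \<omega>)
        + mean_variance M a (\<lambda>\<omega>. (1 - p) * ?R v1 \<omega> + p * ?R v2 \<omega>)"
    using v1 v2 p a
    by (intro mean_variance_exchange_concave borel_measurable_unaffected_revenue[OF bm b]
        integrable_unaffected_revenue_square[OF bm b T]) (auto simp: square_integrable_on_def)
  also have "\<dots> = mean_variance M a (?R (\<lambda>t. p * v1 t + (1 - p) * v2 t))
      + mean_variance M a (?R (\<lambda>t. p * v2 t + (1 - p) * v1 t))"
    using unaffected_revenue_lincomb[OF bm b _ v1 v2] unaffected_revenue_lincomb[OF bm b _ v2 v1]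
    by (intro arg_cong2[where f = "(+)"] mean_variance_cong) simp_all
  finally show ?thesis .
qed

text \<open>Any mixing weight in \<open>(1/2, 1)\<close> would do: for weight \<open>1 - q\<close> the agent's own term gets
  the coefficient \<open>q (1 - 2 q)\<close> and the aggregate one \<open>q\<close>; \<open>q = 1/4\<close> gives \<open>1/8\<close> and \<open>1/4\<close>.\<close>

lemma impact_exchange_identity:
  fixes a a' A A' C C' V V' \<gamma> lam :: real
  shows "a * (\<gamma> * (A + C) + lam * (a + V))
      - (3/4 * a + 1/4 * a') * (\<gamma> * ((3/4 * A + 1/4 * A') + C) + lam * ((3/4 * a + 1/4 * a') + V))
    + (a' * (\<gamma> * (A' + C') + lam * (a' + V'))
      - (3/4 * a' + 1/4 * a) * (\<gamma> * ((3/4 * A' + 1/4 * A) + C') + lam * ((3/4 * a' + 1/4 * a) + V')))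
    = (a - a') * (\<gamma> * (1/8 * (A - A') + 1/4 * ((A + C) - (A' + C')))
                 + lam * (1/8 * (a - a') + 1/4 * ((a + V) - (a' + V'))))"
  by (simp add: field_simps)

lemma impact_cost_rate_exchange:
  fixes n i :: nat and X X' v v' :: "nat \<Rightarrow> real \<Rightarrow> real"
  assumes i: "i < n" and start: "\<And>j. j < n \<Longrightarrow> X j 0 = X' j 0"
  shows "impact_cost_rate \<gamma> lam n i X v (X i) (v i) t
        - impact_cost_rate \<gamma> lam n i X v (\<lambda>s. 3/4 * X i s + 1/4 * X' i s) (\<lambda>s. 3/4 * v i s + 1/4 * v' i s) t
      + (impact_cost_rate \<gamma> lam n i X' v' (X' i) (v' i) t
        - impact_cost_rate \<gamma> lam n i X' v' (\<lambda>s. 3/4 * X' i s + 1/4 * X i s) (\<lambda>s. 3/4 * v' i s + 1/4 * v i s) t)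
    = (v i t - v' i t) * (\<gamma> * (1/8 * (X i t - X' i t) + 1/4 * (\<Sum>j<n. X j t - X' j t))
         + lam * (1/8 * (v i t - v' i t) + 1/4 * (\<Sum>j<n. v j t - v' j t)))"
proof -
  define A A' where "A = X i t - X i 0" and "A' = X' i t - X' i 0"
  define C C' where "C = (\<Sum>j\<in>{..<n} - {i}. X j t - X j 0)" and "C' = (\<Sum>j\<in>{..<n} - {i}. X' j t - X' j 0)"
  define V V' where "V = (\<Sum>j\<in>{..<n} - {i}. v j t)" and "V' = (\<Sum>j\<in>{..<n} - {i}. v' j t)"
  have others: "(\<Sum>j\<in>{..<n} - {i}. f j) = (\<Sum>j<n. f j) - f i" for f :: "nat \<Rightarrow> real"
    using i by (simp add: sum_diff1)
  have increments: "(3/4 * X i t + 1/4 * X' i t) - (3/4 * X i 0 + 1/4 * X' i 0) = 3/4 * A + 1/4 * A'"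
    "(3/4 * X' i t + 1/4 * X i t) - (3/4 * X' i 0 + 1/4 * X i 0) = 3/4 * A' + 1/4 * A"
    by (simp_all add: A_def A'_def field_simps)
  have "impact_cost_rate \<gamma> lam n i X v (X i) (v i) t
        - impact_cost_rate \<gamma> lam n i X v (\<lambda>s. 3/4 * X i s + 1/4 * X' i s) (\<lambda>s. 3/4 * v i s + 1/4 * v' i s) t
      + (impact_cost_rate \<gamma> lam n i X' v' (X' i) (v' i) t
        - impact_cost_rate \<gamma> lam n i X' v' (\<lambda>s. 3/4 * X' i s + 1/4 * X i s) (\<lambda>s. 3/4 * v' i s + 1/4 * v i s) t)
    = (v i t - v' i t) * (\<gamma> * (1/8 * (A - A') + 1/4 * ((A + C) - (A' + C')))
         + lam * (1/8 * (v i t - v' i t) + 1/4 * ((v i t + V) - (v' i t + V'))))"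
    unfolding impact_cost_rate_def A_def[symmetric] A'_def[symmetric] C_def[symmetric] C'_def[symmetric]
      V_def[symmetric] V'_def[symmetric] increments
    by (rule impact_exchange_identity)
  also have "A - A' = X i t - X' i t"
    using start[OF i] by (simp add: A_def A'_def)
  also have "(A + C) - (A' + C') = (\<Sum>j<n. X j t - X' j t)"
    using start start[OF i] by (simp add: A_def A'_def C_def C'_def others sum_subtractf)
  also have "(v i t + V) - (v' i t + V') = (\<Sum>j<n. v j t - v' j t)"
    by (simp add: V_def V'_def others sum_subtractf)
  finally show ?thesis .
qed

lemma impact_cost_exchange:
  fixes n i :: nat and X X' v v' :: "nat \<Rightarrow> real \<Rightarrow> real"
  assumes T: "T \<ge> 0" and i: "i < n"
    and X: "\<forall>j<n. admissible (x j) T (X j) (v j)" and X': "\<forall>j<n. admissible (x j) T (X' j) (v' j)"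
  defines "Y \<equiv> \<lambda>t. 3/4 * X i t + 1/4 * X' i t" and "w \<equiv> \<lambda>t. 3/4 * v i t + 1/4 * v' i t"
    and "Y' \<equiv> \<lambda>t. 3/4 * X' i t + 1/4 * X i t" and "w' \<equiv> \<lambda>t. 3/4 * v' i t + 1/4 * v i t"
  shows "impact_cost \<gamma> lam T n i X v (X i) (v i) - impact_cost \<gamma> lam T n i X v Y w
      + (impact_cost \<gamma> lam T n i X' v' (X' i) (v' i) - impact_cost \<gamma> lam T n i X' v' Y' w')
    = (LINT t:{0..T}|lborel. (v i t - v' i t) *
        (\<gamma> * (1/8 * (X i t - X' i t) + 1/4 * (\<Sum>j<n. X j t - X' j t))
         + lam * (1/8 * (v i t - v' i t) + 1/4 * (\<Sum>j<n. v j t - v' j t))))"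
proof -
  let ?r = "impact_cost_rate \<gamma> lam n i"
  have Xi: "admissible (x i) T (X i) (v i)" and X'i: "admissible (x i) T (X' i) (v' i)"
    using X X' i by auto
  have "admissible (x i) T Y w" "admissible (x i) T Y' w'"
    using admissible_convex_comb[OF Xi X'i, of "3/4"] admissible_convex_comb[OF X'i Xi, of "3/4"]
    by (simp_all add: Y_def w_def Y'_def w'_def)
  then have integrable: "set_integrable lborel {0..T} (?r X v (X i) (v i))"
    "set_integrable lborel {0..T} (?r X v Y w)" "set_integrable lborel {0..T} (?r X' v' (X' i) (v' i))"
    "set_integrable lborel {0..T} (?r X' v' Y' w')"
    using Xi X'i X X' by (auto intro: set_integrable_impact_cost_rate)
  have start: "X j 0 = X' j 0" if "j < n" for j
    using admissible_start[of "x j" T "X j" "v j"] admissible_start[of "x j" T "X' j" "v' j"] X X' that T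
    by simp
  have "impact_cost \<gamma> lam T n i X v (X i) (v i) - impact_cost \<gamma> lam T n i X v Y w
      + (impact_cost \<gamma> lam T n i X' v' (X' i) (v' i) - impact_cost \<gamma> lam T n i X' v' Y' w')
    = (LINT t:{0..T}|lborel. ?r X v (X i) (v i) t - ?r X v Y w t + (?r X' v' (X' i) (v' i) t - ?r X' v' Y' w' t))"
    unfolding impact_cost_def
    by (simp only: set_integral_add(2)[OF set_integral_diff(1)[OF integrable(1,2)] set_integral_diff(1)[OF integrable(3,4)]]
        set_integral_diff(2)[OF integrable(1,2)] set_integral_diff(2)[OF integrable(3,4)])
  also have "\<dots> = (LINT t:{0..T}|lborel. (v i t - v' i t) *
        (\<gamma> * (1/8 * (X i t - X' i t) + 1/4 * (\<Sum>j<n. X j t - X' j t))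
         + lam * (1/8 * (v i t - v' i t) + 1/4 * (\<Sum>j<n. v j t - v' j t))))"
    unfolding Y_def w_def Y'_def w'_def
    by (intro set_lebesgue_integral_cong allI impI
        impact_cost_rate_exchange[where X = X and X' = X', OF i start]) simp_all
  finally show ?thesis .
qed

lemma equilibrium_agent_inequality:
  fixes n i :: nat and X X' v v' :: "nat \<Rightarrow> real \<Rightarrow> real"
  assumes bm: "std_brownian_motion M W" and b: "continuous_on {0..T} b" and T: "T \<ge> 0"
    and i: "i < n" and a: "0 \<le> a"
    and X: "\<forall>j<n. admissible (x j) T (X j) (v j)" and X': "\<forall>j<n. admissible (x j) T (X' j) (v' j)"
    and best: "\<And>Y w. admissible (x i) T Y w \<Longrightarrow>
      mv_objective M S0 \<sigma> b W \<gamma> lam T n a i X v Y w \<le> mv_objective M S0 \<sigma> b W \<gamma> lam T n a i X v (X i) (v i)"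
    and best': "\<And>Y w. admissible (x i) T Y w \<Longrightarrow>
      mv_objective M S0 \<sigma> b W \<gamma> lam T n a i X' v' Y w \<le> mv_objective M S0 \<sigma> b W \<gamma> lam T n a i X' v' (X' i) (v' i)"
  shows "(LINT t:{0..T}|lborel. (v i t - v' i t) *
      (\<gamma> * (1/8 * (X i t - X' i t) + 1/4 * (\<Sum>j<n. X j t - X' j t))
       + lam * (1/8 * (v i t - v' i t) + 1/4 * (\<Sum>j<n. v j t - v' j t)))) \<le> 0"
proof -
  define Y w Y' w' where "Y = (\<lambda>t. 3/4 * X i t + 1/4 * X' i t)" and "w = (\<lambda>t. 3/4 * v i t + 1/4 * v' i t)"
    and "Y' = (\<lambda>t. 3/4 * X' i t + 1/4 * X i t)" and "w' = (\<lambda>t. 3/4 * v' i t + 1/4 * v i t)"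
  let ?G = "\<lambda>u. mean_variance M a (unaffected_revenue S0 \<sigma> b W T u)"
  let ?K = "impact_cost \<gamma> lam T n i"
  have Xi: "admissible (x i) T (X i) (v i)" and X'i: "admissible (x i) T (X' i) (v' i)"
    using X X' i by auto
  have Y: "admissible (x i) T Y w"
    using admissible_convex_comb[OF Xi X'i, of "3/4"] by (simp add: Y_def w_def)
  have Y': "admissible (x i) T Y' w'"
    using admissible_convex_comb[OF X'i Xi, of "3/4"] by (simp add: Y'_def w'_def)
  have "?G w - ?K X v Y w \<le> ?G (v i) - ?K X v (X i) (v i)"
    using best[OF Y] by (simp add: mv_objective_eq_unaffected_minus_impact[OF bm b T _ X] Y Xi)
  moreover have "?G w' - ?K X' v' Y' w' \<le> ?G (v' i) - ?K X' v' (X' i) (v' i)"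
    using best'[OF Y'] by (simp add: mv_objective_eq_unaffected_minus_impact[OF bm b T _ X'] Y' X'i)
  moreover have "?G (v i) + ?G (v' i) \<le> ?G w + ?G w'"
    using mean_variance_unaffected_revenue_exchange[OF bm b T
        admissible_square_integrable[OF Xi] admissible_square_integrable[OF X'i], of "3/4" a] a
    by (simp add: w_def w'_def)
  ultimately have "?K X v (X i) (v i) - ?K X v Y w + (?K X' v' (X' i) (v' i) - ?K X' v' Y' w') \<le> 0"
    by linarith
  then show ?thesis
    unfolding Y_def w_def Y'_def w'_def impact_cost_exchange[OF T i X X'] .
qed

lemma nash_equilibria_interaction_nonpos:
  fixes n :: nat and X X' :: "nat \<Rightarrow> real \<Rightarrow> real"
  assumes bm: "std_brownian_motion M W" and b: "continuous_on {0..T} b" and T: "T \<ge> 0"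
    and \<alpha>: "\<forall>i<n. \<alpha> i \<ge> 0"
    and "nash_equilibrium_mv M S0 \<sigma> b W \<gamma> lam T n \<alpha> x X"
    and "nash_equilibrium_mv M S0 \<sigma> b W \<gamma> lam T n \<alpha> x X'"
  obtains v v' where "\<forall>j<n. admissible (x j) T (X j) (v j)" and "\<forall>j<n. admissible (x j) T (X' j) (v' j)"
    and "\<And>i. i < n \<Longrightarrow> (LINT t:{0..T}|lborel. (v i t - v' i t) *
      (\<gamma> * (1/8 * (X i t - X' i t) + 1/4 * (\<Sum>j<n. X j t - X' j t))
       + lam * (1/8 * (v i t - v' i t) + 1/4 * (\<Sum>j<n. v j t - v' j t)))) \<le> 0"
proof -
  obtain v v' where X: "\<forall>j<n. admissible (x j) T (X j) (v j)" and X': "\<forall>j<n. admissible (x j) T (X' j) (v' j)"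
    and best: "\<forall>i<n. \<forall>Y w. admissible (x i) T Y w \<longrightarrow> mv_objective M S0 \<sigma> b W \<gamma> lam T n (\<alpha> i) i X v Y w
                   \<le> mv_objective M S0 \<sigma> b W \<gamma> lam T n (\<alpha> i) i X v (X i) (v i)"
    and best': "\<forall>i<n. \<forall>Y w. admissible (x i) T Y w \<longrightarrow> mv_objective M S0 \<sigma> b W \<gamma> lam T n (\<alpha> i) i X' v' Y w
                   \<le> mv_objective M S0 \<sigma> b W \<gamma> lam T n (\<alpha> i) i X' v' (X' i) (v' i)"
    using assms(5,6) unfolding nash_equilibrium_mv_def by blast
  show ?thesis
    using \<alpha> by (intro that[OF X X'] equilibrium_agent_inequality[OF bm b T _ _ X X'
        best[rule_format] best'[rule_format]]) auto
qed

theorem lemma4p1: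
  fixes M :: "'a measure" and W :: "real \<Rightarrow> 'a \<Rightarrow> real"
    and S0 \<sigma> \<gamma> lam T :: real and b :: "real \<Rightarrow> real"
    and n :: nat and \<alpha> x :: "nat \<Rightarrow> real" and X X' :: "nat \<Rightarrow> real \<Rightarrow> real"
  assumes "T > 0"
    and "std_brownian_motion M W"
    and "\<sigma> \<ge> 0" and "\<gamma> \<ge> 0" and "lam > 0"
    and "continuous_on {0..T} b"
    and "\<forall>i<n. \<alpha> i \<ge> 0"
    and "nash_equilibrium_mv M S0 \<sigma> b W \<gamma> lam T n \<alpha> x X"
    and "nash_equilibrium_mv M S0 \<sigma> b W \<gamma> lam T n \<alpha> x X'"
  shows "\<forall>i<n. \<forall>t\<in>{0..T}. X i t = X' i t"
proof (intro allI impI ballI)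
  fix i t assume i: "i < n" and t: "t \<in> {0..T}"
  obtain v v' where X: "\<forall>j<n. admissible (x j) T (X j) (v j)" and X': "\<forall>j<n. admissible (x j) T (X' j) (v' j)"
    and interaction: "\<And>i. i < n \<Longrightarrow> (LINT t:{0..T}|lborel. (v i t - v' i t) *
      (\<gamma> * (1/8 * (X i t - X' i t) + 1/4 * (\<Sum>j<n. X j t - X' j t))
       + lam * (1/8 * (v i t - v' i t) + 1/4 * (\<Sum>j<n. v j t - v' j t)))) \<le> 0"
    using nash_equilibria_interaction_nonpos[OF assms(2,6) _ assms(7-9)] assms(1) by auto
  have "square_integrable_on T (\<lambda>t. v j t - v' j t)" if "j < n" for j
    using square_integrable_on_lincomb[of T "v j" "v' j" 1 "-1"] X X' that
    by (auto intro: admissible_square_integrable)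
  moreover have "X j t - X' j t = (LINT s:{0..t}|lborel. v j s - v' j s)" if "j < n" "t \<in> {0..T}" for j t
    using X X' that by (intro admissible_diff) auto
  ultimately have "X i t - X' i t = 0"
    using interaction assms(4,5) i t
    by (intro indefinite_integrals_vanish[where d = "\<lambda>j t. v j t - v' j t" and D = "\<lambda>j t. X j t - X' j t"])
      auto
  then show "X i t = X' i t" by simp
qed

end
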